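(* Let $n$ be a positive integer and $\alpha,\beta\in\mathbb{R}$. Put $M=T_n\cdot\max\{1,n^{2\beta}\}\cdot\max_{1\le i\le n}|J_{\alpha-\beta}(i)|$. Then every eigenvalue of $A_n^{\alpha,\beta}$ lies in the real interval \[ \Big[\,2\min\{1,n^{\alpha+\beta}\}-M\ ,\ M\,\Big]. \]
   Context: For $i,j$ positive integers, $(i,j)$ denotes the greatest common divisor and $[i,j]$ the least common multiple. For $\alpha,\beta\in\mathbb{R}$ and a positive integer $n$, $A_n^{\alpha,\beta}$ is the $n\times n$ real matrix with $(i,j)$ entry $(i,j)^{\alpha}[i,j]^{\beta}$. $E_n$ is the $n\times n$ matrix with $(E_n)_{ij}=1$ if $j\mid i$ and $(E_n)_{ij}=0$ otherwise; $t_n$ denotes the smallest eigenvalue and $T_n$ the largest eigenvalue of the symmetric matrix $E_n^{T}E_n$. For real $s$, $J_s$ is the arithmetical function $J_s(k)=k^{s}\prod_{p\mid k}\left(1-p^{-s}\right)$ (product over primes $p$ dividing $k$), equivalently $J_s(k)=\sum_{d\mid k} d^{s}\mu(k/d)$ where $\mu$ is the Möbius function. *)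

theory Defs
  imports "Jordan_Normal_Form.Char_Poly" "HOL-Computational_Algebra.Primes"
begin

text \<open>Matrices are n x n with 0-based indices; entry (i,j) corresponds to the
paper's entry (i+1, j+1).\<close>

definition gcd_lcm_mat :: "nat \<Rightarrow> real \<Rightarrow> real \<Rightarrow> real mat" where
  "gcd_lcm_mat n \<alpha> \<beta> = mat n n (\<lambda>(i,j).
     real (gcd (i+1) (j+1)) powr \<alpha> * real (lcm (i+1) (j+1)) powr \<beta>)"

definition E_mat :: "nat \<Rightarrow> real mat" where
  "E_mat n = mat n n (\<lambda>(i,j). if (j+1) dvd (i+1) then 1 else 0)"

definition T_max :: "nat \<Rightarrow> real" where
  "T_max n = Max {k. eigenvalue (transpose_mat (E_mat n) * E_mat n) k}"

definition t_min :: "nat \<Rightarrow> real" where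
  "t_min n = Min {k. eigenvalue (transpose_mat (E_mat n) * E_mat n) k}"

definition Jordan_tot :: "real \<Rightarrow> nat \<Rightarrow> real" where
  "Jordan_tot s k = real k powr s * (\<Prod>p\<in>prime_factors k. (1 - real p powr (-s)))"

end

(*
  Since gcd(i,j) lcm(i,j) = ij and gcd(i,j)^s is the sum of J_s(k) over the divisors k of
  gcd(i,j), the matrix factors as A = D E \<Lambda> E\<^sup>T D with D = diag(i^\<beta>) and
  \<Lambda> = diag(J_{\<alpha>-\<beta>}(k)). Hence x\<^sup>T A x = \<Sum>_k J_{\<alpha>-\<beta>}(k) ((E\<^sup>T D x)_k)^2, which is at most
  max |J| \<cdot> |E\<^sup>T D x|^2 \<le> max |J| \<cdot> T_n \<cdot> |D x|^2 \<le> M |x|^2: the largest eigenvalue T_n of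
  E\<^sup>T E is the maximum of the Rayleigh quotient of E\<^sup>T E (a compactness argument), and E and
  E\<^sup>T have the same operator norm.
  For the lower bound, A has nonnegative entries and diagonal entries i^(\<alpha>+\<beta>) \<ge> d, where
  d = min 1 (n^(\<alpha>+\<beta>)); so x\<^sup>T A x + |x|\<^sup>T A |x| \<ge> 2 d |x|^2, while |x|\<^sup>T A |x| \<le> M |x|^2.
*)

theory Submission
  imports Defs "Jordan_Normal_Form.Spectral_Radius" "HOL-Analysis.Function_Topology"
    "HOL-Analysis.Convex"
begin

lemma Jordan_tot_mult_coprime:
  assumes "coprime a b" "a > 0" "b > 0"
  shows "Jordan_tot s (a * b) = Jordan_tot s a * Jordan_tot s b"
proof -
  have "prime_factors a \<inter> prime_factors b = {}"
    using assms(1) by (auto simp: in_prime_factors_iff dest: coprime_common_divisor not_prime_unit)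
  then show ?thesis
    using assms(2,3) unfolding Jordan_tot_def
    by (simp add: prime_factors_product prod.union_disjoint powr_mult)
qed

lemma Jordan_tot_prime_power:
  assumes "prime p"
  shows "Jordan_tot s (p ^ Suc k) = real p powr (real (Suc k) * s) - real p powr (real k * s)"
proof -
  have p: "real p > 0" using assms prime_gt_0_nat by simp
  have "prime_factors (p ^ Suc k) = {p}"
    using assms by (simp only: prime_factorization_prime_power) simp
  moreover have "real (p ^ Suc k) powr s = real p powr (real (Suc k) * s)"
    using p by (simp only: of_nat_power powr_realpow[symmetric] powr_powr)
  moreover have "real p powr (real (Suc k) * s) * real p powr - s = real p powr (real k * s)"
    by (simp add: powr_add[symmetric] algebra_simps)
  ultimately show ?thesis
    by (simp add: Jordan_tot_def right_diff_distrib)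
qed

lemma sum_Jordan_tot_prime_power_divisors:
  assumes "prime p"
  shows "(\<Sum>d | d dvd p ^ k. Jordan_tot s d) = real p powr (real k * s)"
proof -
  have "{d. d dvd p ^ k} = (\<lambda>i. p ^ i) ` {..k}"
    using divides_primepow_nat[OF assms] by auto
  moreover have "inj (\<lambda>i. p ^ i)"
    using assms prime_gt_1_nat by (auto intro: injI simp: power_inject_exp)
  moreover have "(\<Sum>i\<le>k. Jordan_tot s (p ^ i)) = real p powr (real k * s)"
  proof (induction k)
    case 0
    show ?case using assms prime_gt_0_nat by (simp add: Jordan_tot_def)
  next
    case (Suc k)
    have "(\<Sum>i\<le>Suc k. Jordan_tot s (p ^ i)) = (\<Sum>i\<le>k. Jordan_tot s (p ^ i)) + Jordan_tot s (p ^ Suc k)"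
      by (rule sum.atMost_Suc)
    then show ?case
      by (simp only: Suc.IH Jordan_tot_prime_power[OF assms])
  qed
  ultimately show ?thesis
    by (simp add: sum.reindex inj_on_subset)
qed

lemma sum_divisors_mult_coprime:
  fixes f :: "nat \<Rightarrow> 'a :: comm_monoid_add"
  assumes "coprime a b" "a > 0" "b > 0"
  shows "(\<Sum>d | d dvd a * b. f d) = (\<Sum>d | d dvd a. \<Sum>e | e dvd b. f (d * e))"
proof -
  let ?D = "\<lambda>n. {d :: nat. d dvd n}"
  have inj: "inj_on (\<lambda>(d, e). d * e) (?D a \<times> ?D b)"
  proof (rule inj_onI, clarsimp)
    fix d e d' e' assume dvd: "d dvd a" "e dvd b" "d' dvd a" "e' dvd b" and eq: "d * e = d' * e'"
    have "coprime d e'" "coprime d' e"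
      using assms(1) dvd by (auto intro: coprime_imp_coprime dvd_trans)
    then have "d dvd d'" "d' dvd d"
      using eq by (metis coprime_dvd_mult_left_iff dvd_triv_left)+
    then have "d = d'" by (rule dvd_antisym)
    moreover have "d > 0" using dvd(1) assms(2) by (auto intro: Nat.gr0I)
    ultimately show "d = d' \<and> e = e'" using eq by simp
  qed
  have img: "?D (a * b) = (\<lambda>(d, e). d * e) ` (?D a \<times> ?D b)"
    by (auto elim!: dvd_productE intro: mult_dvd_mono)
  have "(\<Sum>d | d dvd a * b. f d) = (\<Sum>(d, e) \<in> ?D a \<times> ?D b. f (d * e))"
    unfolding img sum.reindex[OF inj] by (simp add: case_prod_unfold)
  then show ?thesis
    by (simp add: sum.cartesian_product)
qed

lemma prime_power_coprime_factorization:
  fixes g :: nat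
  assumes "g > 1"
  obtains p k h where "prime p" "g = p ^ k * h" "coprime (p ^ k) h" "0 < h" "h < g"
proof -
  obtain p where p: "prime p" "p dvd g"
    using assms prime_factor_nat by (metis less_irrefl)
  define k where "k = multiplicity p g"
  have "g \<noteq> 0" "\<not> is_unit p"
    using assms p(1) by (auto simp: not_prime_unit)
  then obtain h where g: "g = p ^ k * h" and "\<not> p dvd h"
    unfolding k_def by (rule multiplicity_decompose')
  then have "coprime (p ^ k) h"
    using p(1) by (simp add: prime_imp_coprime)
  moreover have "k > 0"
    using p assms unfolding k_def by (simp add: prime_multiplicity_gt_zero_iff)
  then have "p ^ k > 1"
    by (rule one_less_power[OF prime_gt_1_nat[OF p(1)]])
  moreover have "h > 0"
    using assms unfolding g by (intro gr0I) simp
  ultimately show ?thesis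
    using that p(1) g by simp
qed

lemma sum_divisors_Jordan_tot:
  assumes "g > 0"
  shows "(\<Sum>d | d dvd g. Jordan_tot s d) = real g powr s"
  using assms
proof (induction g rule: less_induct)
  case (less g)
  show ?case
  proof (cases "g = 1")
    case True
    then show ?thesis by (simp add: Jordan_tot_def)
  next
    case False
    then have "g > 1"
      using less.prems by simp
    then obtain p k h where p: "prime p" and g: "g = p ^ k * h"
      and cop: "coprime (p ^ k) h" and h: "0 < h" "h < g"
      by (rule prime_power_coprime_factorization)
    have mult: "Jordan_tot s (d * e) = Jordan_tot s d * Jordan_tot s e"
      if "d dvd p ^ k" "e dvd h" for d e
    proof (rule Jordan_tot_mult_coprime)
      show "coprime d e" using that cop by (rule coprime_divisors)
      show "d > 0" using _ that(1) by (rule dvd_pos_nat) (simp add: p prime_gt_0_nat)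
      show "e > 0" using h(1) that(2) by (rule dvd_pos_nat)
    qed
    have "(\<Sum>d | d dvd g. Jordan_tot s d)
        = (\<Sum>d | d dvd p ^ k. \<Sum>e | e dvd h. Jordan_tot s (d * e))"
      unfolding g using cop h(1) p
      by (intro sum_divisors_mult_coprime) (simp_all add: prime_gt_0_nat)
    also have "\<dots> = (\<Sum>d | d dvd p ^ k. Jordan_tot s d) * (\<Sum>e | e dvd h. Jordan_tot s e)"
      unfolding sum_product by (intro sum.cong refl) (simp add: mult)
    also have "\<dots> = real p powr (real k * s) * real h powr s"
      using less.IH h by (simp only: sum_Jordan_tot_prime_power_divisors[OF p])
    also have "\<dots> = real g powr s"
      unfolding g using prime_gt_0_nat[OF p]
      by (simp add: powr_mult powr_powr powr_realpow[symmetric])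
    finally show ?thesis .
  qed
qed

lemma gcd_powr_eq_sum_Jordan_tot:
  assumes "i < n" "j < n"
  shows "real (gcd (Suc i) (Suc j)) powr s
    = (\<Sum>k<n. of_bool (Suc k dvd Suc i) * of_bool (Suc k dvd Suc j) * Jordan_tot s (Suc k))"
proof -
  define K where "K = {k \<in> {..<n}. Suc k dvd Suc i \<and> Suc k dvd Suc j}"
  have "{d. d dvd gcd (Suc i) (Suc j)} = Suc ` K"
  proof (intro equalityI subsetI)
    fix d assume "d \<in> {d. d dvd gcd (Suc i) (Suc j)}"
    then have d: "d dvd Suc i" "d dvd Suc j" by simp_all
    then obtain k where k: "d = Suc k"
      using not0_implies_Suc by (metis dvd_0_left_iff nat.distinct(1))
    have "d \<le> Suc i" using d(1) by (rule dvd_imp_le) simp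
    then show "d \<in> Suc ` K" using k d assms(1) unfolding K_def by auto
  qed (auto simp: K_def)
  then have "real (gcd (Suc i) (Suc j)) powr s = (\<Sum>k\<in>K. Jordan_tot s (Suc k))"
    using sum_divisors_Jordan_tot[of "gcd (Suc i) (Suc j)" s] by (simp add: sum.reindex)
  also have "\<dots> = (\<Sum>k<n. if Suc k dvd Suc i \<and> Suc k dvd Suc j then Jordan_tot s (Suc k) else 0)"
    unfolding K_def by (rule sum.inter_filter) simp
  also have "\<dots> = (\<Sum>k<n. of_bool (Suc k dvd Suc i) * of_bool (Suc k dvd Suc j) * Jordan_tot s (Suc k))"
    by (intro sum.cong refl) simp
  finally show ?thesis .
qed

lemma gcd_powr_lcm_powr:
  fixes i j :: nat
  assumes "i > 0" "j > 0"
  shows "real (gcd i j) powr a * real (lcm i j) powr b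
     = real i powr b * real j powr b * real (gcd i j) powr (a - b)"
proof -
  have "real (gcd i j) * real (lcm i j) = real i * real j"
    by (metis of_nat_mult prod_gcd_lcm_nat)
  then have "real (gcd i j) powr b * real (lcm i j) powr b = real i powr b * real j powr b"
    by (metis of_nat_0_le_iff powr_mult)
  moreover have "real (gcd i j) powr a = real (gcd i j) powr (a - b) * real (gcd i j) powr b"
    by (simp add: powr_add[symmetric])
  ultimately show ?thesis
    by (simp add: algebra_simps)
qed

definition bilin_form :: "real mat \<Rightarrow> (nat \<Rightarrow> real) \<Rightarrow> (nat \<Rightarrow> real) \<Rightarrow> real" where
  "bilin_form A u v = (\<Sum>i<dim_row A. \<Sum>j<dim_row A. u i * A $$ (i, j) * v j)"

definition sum_sq :: "nat \<Rightarrow> (nat \<Rightarrow> real) \<Rightarrow> real" where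
  "sum_sq n x = (\<Sum>i<n. (x i)\<^sup>2)"

lemma sum_sq_nonneg: "sum_sq n x \<ge> 0"
  unfolding sum_sq_def by (simp add: sum_nonneg)

lemma sum_sq_eq_0_iff: "sum_sq n x = 0 \<longleftrightarrow> (\<forall>i<n. x i = 0)"
  unfolding sum_sq_def by (auto simp: sum_nonneg_eq_0_iff)

lemma sum_sq_add_smult:
  "sum_sq n (\<lambda>i. u i + t * v i) = sum_sq n u + 2 * t * (\<Sum>i<n. u i * v i) + t\<^sup>2 * sum_sq n v"
  unfolding sum_sq_def
  by (simp add: power2_eq_square algebra_simps sum.distrib sum_distrib_left)

lemma bilin_form_commute:
  assumes "A \<in> carrier_mat n n" "transpose_mat A = A"
  shows "bilin_form A u v = bilin_form A v u"
proof -
  have "A $$ (i, j) = A $$ (j, i)" if "i < n" "j < n" for i j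
    using assms that by (metis carrier_matD index_transpose_mat(1))
  then show ?thesis
    using assms(1) unfolding bilin_form_def
    by (subst sum.swap) (auto intro!: sum.cong simp: mult_ac)
qed

lemma bilin_form_add_smult:
  assumes "A \<in> carrier_mat n n" "transpose_mat A = A"
  shows "bilin_form A (\<lambda>i. u i + t * v i) (\<lambda>i. u i + t * v i)
    = bilin_form A u u + 2 * t * bilin_form A u v + t\<^sup>2 * bilin_form A v v"
proof -
  have "bilin_form A (\<lambda>i. u i + t * v i) (\<lambda>i. u i + t * v i)
    = bilin_form A u u + t * bilin_form A u v + t * bilin_form A v u + t\<^sup>2 * bilin_form A v v"
    unfolding bilin_form_def
    by (simp add: power2_eq_square algebra_simps sum.distrib sum_distrib_left)
  then show ?thesis
    using bilin_form_commute[OF assms, of v u] by simp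
qed

lemma bilin_form_eq_sum_mult_mat_vec:
  assumes "A \<in> carrier_mat n n"
  shows "bilin_form A u v = (\<Sum>i<n. u i * (A *\<^sub>v vec n v) $ i)"
  using assms unfolding bilin_form_def
  by (simp add: scalar_prod_def lessThan_atLeast0 row_def sum_distrib_left mult_ac)

lemma quadratic_nonpos_imp_linear_coeff_zero:
  fixes c e :: real
  assumes "\<And>t. 2 * t * c + t\<^sup>2 * e \<le> 0"
  shows "c = 0"
proof -
  define d where "d = \<bar>e\<bar> + 1"
  have d: "d > 0" "2 * d + e > 0"
    unfolding d_def by (auto simp: abs_if)
  have "(2 * (c / d) * c + (c / d)\<^sup>2 * e) * d\<^sup>2 = c\<^sup>2 * (2 * d + e)"
    using d(1) by (simp add: field_simps power2_eq_square)
  moreover have "2 * (c / d) * c + (c / d)\<^sup>2 * e \<le> 0"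
    by (rule assms)
  ultimately have "c\<^sup>2 * (2 * d + e) \<le> 0"
    by (metis mult_nonpos_nonneg zero_le_power2)
  then have "c\<^sup>2 \<le> 0"
    using d(2) by (simp add: mult_le_0_iff)
  then show "c = 0" by simp
qed

lemma eigenvector_of_bilin_form_maximizer:
  assumes A: "A \<in> carrier_mat n n" "transpose_mat A = A"
    and bound: "\<And>x. bilin_form A x x \<le> lam * sum_sq n x"
    and attained: "bilin_form A u u = lam * sum_sq n u"
  shows "A *\<^sub>v vec n u = lam \<cdot>\<^sub>v vec n u"
proof -
  have orth: "bilin_form A v u = lam * (\<Sum>i<n. v i * u i)" for v
  proof -
    \<comment> \<open>\<open>t = 0\<close> maximizes \<open>Q(u + t v) - lam N(u + t v)\<close>, so its linear coefficient vanishes\<close>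
    have "2 * t * (bilin_form A u v - lam * (\<Sum>i<n. u i * v i))
        + t\<^sup>2 * (bilin_form A v v - lam * sum_sq n v) \<le> 0" for t
      using bound[of "\<lambda>i. u i + t * v i"] attained
      by (simp add: bilin_form_add_smult[OF A] sum_sq_add_smult algebra_simps)
    then have "bilin_form A u v = lam * (\<Sum>i<n. u i * v i)"
      using quadratic_nonpos_imp_linear_coeff_zero by fastforce
    then show ?thesis
      by (simp add: bilin_form_commute[OF A] mult.commute)
  qed
  define w where "w i = (A *\<^sub>v vec n u) $ i - lam * u i" for i
  have "sum_sq n w = bilin_form A w u - lam * (\<Sum>i<n. w i * u i)"
    unfolding sum_sq_def bilin_form_eq_sum_mult_mat_vec[OF A(1)]
    by (simp add: w_def power2_eq_square algebra_simps sum_subtractf sum_distrib_left)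
  then have "\<forall>i<n. w i = 0"
    by (simp add: orth sum_sq_eq_0_iff[symmetric])
  then show ?thesis
    using A(1) by (intro eq_vecI) (simp_all add: w_def)
qed

lemma continuous_on_coordinate: "continuous_on S (\<lambda>w :: nat \<Rightarrow> real. w i)"
  by (rule continuous_on_subset[OF continuous_on_product_coordinates]) simp

text \<open>Vectors are functions \<open>nat \<Rightarrow> real\<close>; the unit sphere of the first \<open>n\<close> coordinates is
  compact only once the remaining coordinates are pinned to 0.\<close>

lemma compact_unit_sphere_upto:
  "compact {w :: nat \<Rightarrow> real. (\<forall>i\<ge>n. w i = 0) \<and> sum_sq n w = 1}" (is "compact ?K")
proof -
  let ?P = "PiE UNIV (\<lambda>i. if i < n then {-1..1} else {0 :: real})"
  have "compactin (product_topology (\<lambda>i. euclidean) UNIV) ?P"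
    by (subst compactin_PiE) (auto simp: compactin_euclidean_iff)
  then have "compact ?P"
    by (simp add: euclidean_product_topology compactin_euclidean_iff)
  moreover have "closed ?K"
    unfolding sum_sq_def
    by (intro closed_Collect_conj closed_Collect_all closed_Collect_imp open_Collect_const
        closed_Collect_eq continuous_on_coordinate continuous_intros)
  moreover have "?K \<subseteq> ?P"
  proof
    fix w assume w: "w \<in> ?K"
    have "\<bar>w i\<bar> \<le> 1" if "i < n" for i
    proof -
      have "(w i)\<^sup>2 \<le> sum_sq n w"
        unfolding sum_sq_def using that by (intro member_le_sum) auto
      then show ?thesis using w by (simp add: abs_square_le_1)
    qed
    then show "w \<in> ?P" using w by (auto simp: abs_le_iff)
  qed
  ultimately have "compact (?P \<inter> ?K)"
    by (intro compact_Int_closed)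
  then show ?thesis
    using \<open>?K \<subseteq> ?P\<close> by (simp add: Int_absorb1)
qed

lemma bilin_form_attains_max_on_sphere:
  assumes A: "A \<in> carrier_mat n n" and "0 < n"
  obtains u where "sum_sq n u = 1" "\<And>x. bilin_form A x x \<le> bilin_form A u u * sum_sq n x"
proof -
  define K where "K = {w :: nat \<Rightarrow> real. (\<forall>i\<ge>n. w i = 0) \<and> sum_sq n w = 1}"
  have "sum_sq n (\<lambda>i. of_bool (i = 0)) = (\<Sum>i<n. if i = 0 then 1 else 0)"
    unfolding sum_sq_def by (intro sum.cong) auto
  also have "\<dots> = 1"
    using \<open>0 < n\<close> by (simp add: sum.delta)
  finally have "(\<lambda>i. of_bool (i = 0)) \<in> K"
    using \<open>0 < n\<close> by (simp add: K_def)
  moreover have "continuous_on K (\<lambda>w. bilin_form A w w)"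
    unfolding bilin_form_def
    by (intro continuous_intros continuous_on_coordinate)
  ultimately obtain u where u: "u \<in> K" and max: "\<And>w. w \<in> K \<Longrightarrow> bilin_form A w w \<le> bilin_form A u u"
    using continuous_attains_sup[OF compact_unit_sphere_upto[of n, folded K_def]] by blast
  show ?thesis
  proof (rule that)
    show "sum_sq n u = 1" using u by (simp add: K_def)
    fix x
    show "bilin_form A x x \<le> bilin_form A u u * sum_sq n x"
    proof (cases "sum_sq n x = 0")
      case True
      then have "bilin_form A x x = 0"
        using A by (simp add: bilin_form_def sum_sq_eq_0_iff)
      then show ?thesis using True by simp
    next
      case False
      define r where "r = sqrt (sum_sq n x)"
      have r: "r > 0" "r\<^sup>2 = sum_sq n x"
        using False sum_sq_nonneg[of n x] by (simp_all add: r_def)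
      define w where "w i = (if i < n then x i / r else 0)" for i
      have "sum_sq n w = sum_sq n x / r\<^sup>2"
        unfolding sum_sq_def w_def by (simp add: sum_divide_distrib power_divide)
      then have "w \<in> K"
        using r False by (simp add: K_def w_def)
      moreover have "bilin_form A w w = bilin_form A x x / r\<^sup>2"
        using A unfolding bilin_form_def w_def by (simp add: sum_divide_distrib power2_eq_square)
      ultimately have "bilin_form A x x / r\<^sup>2 \<le> bilin_form A u u"
        using max by force
      then have "bilin_form A x x \<le> bilin_form A u u * r\<^sup>2"
        using r(1) by (simp add: pos_divide_le_eq)
      then show ?thesis
        using r(2) by simp
    qed
  qed
qed

lemma symmetric_mat_eigenvalue_bounds_bilin_form:
  assumes A: "A \<in> carrier_mat n n" "transpose_mat A = A" and "0 < n"
  obtains lam where "eigenvalue A lam" "\<And>x. bilin_form A x x \<le> lam * sum_sq n x"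
proof -
  obtain u where u: "sum_sq n u = 1" and max: "\<And>x. bilin_form A x x \<le> bilin_form A u u * sum_sq n x"
    using bilin_form_attains_max_on_sphere[OF A(1) \<open>0 < n\<close>] by blast
  have "A *\<^sub>v vec n u = bilin_form A u u \<cdot>\<^sub>v vec n u"
    using max u by (intro eigenvector_of_bilin_form_maximizer[OF A]) simp_all
  moreover have "vec n u \<noteq> 0\<^sub>v n"
  proof
    assume "vec n u = 0\<^sub>v n"
    then have "\<forall>i<n. u i = 0" by (metis index_vec index_zero_vec(1))
    then show False using u by (simp add: sum_sq_eq_0_iff[symmetric])
  qed
  ultimately have "eigenvalue A (bilin_form A u u)"
    using A(1) unfolding eigenvalue_def eigenvector_def by (auto intro!: exI[of _ "vec n u"])
  then show ?thesis using max by (rule that)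
qed

lemma bilin_form_le_Max_eigenvalue:
  assumes A: "A \<in> carrier_mat n n" "transpose_mat A = A" and "0 < n"
  shows "bilin_form A x x \<le> Max {k. eigenvalue A k} * sum_sq n x"
proof -
  obtain lam where lam: "eigenvalue A lam" and bound: "\<And>x. bilin_form A x x \<le> lam * sum_sq n x"
    using symmetric_mat_eigenvalue_bounds_bilin_form[OF assms] by blast
  have "finite {k. eigenvalue A k}"
    using card_finite_spectrum(1)[OF A(1)] unfolding spectrum_def by simp
  then have "lam \<le> Max {k. eigenvalue A k}"
    using lam by (intro Max_ge) auto
  then have "lam * sum_sq n x \<le> Max {k. eigenvalue A k} * sum_sq n x"
    using sum_sq_nonneg by (rule mult_right_mono)
  then show ?thesis using bound[of x] by linarith
qed

lemma eigenvalue_imp_bilin_form_eq: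
  assumes A: "A \<in> carrier_mat n n" and "eigenvalue A ev"
  obtains x where "sum_sq n x > 0" "bilin_form A x x = ev * sum_sq n x"
proof -
  obtain v where v: "v \<in> carrier_vec n" "v \<noteq> 0\<^sub>v n" "A *\<^sub>v v = ev \<cdot>\<^sub>v v"
    using assms unfolding eigenvalue_def eigenvector_def by auto
  define x where "x i = v $ i" for i
  have vec: "vec n x = v"
    using v(1) by (auto simp: x_def)
  have "bilin_form A x x = (\<Sum>i<n. x i * (ev * x i))"
    using v(1,3) by (simp add: bilin_form_eq_sum_mult_mat_vec[OF A] vec x_def)
  also have "\<dots> = ev * sum_sq n x"
    by (simp add: sum_sq_def sum_distrib_left power2_eq_square mult_ac)
  finally have "bilin_form A x x = ev * sum_sq n x" .
  moreover have "sum_sq n x \<noteq> 0"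
    using v(1,2) by (auto simp: sum_sq_eq_0_iff x_def)
  ultimately show ?thesis
    using sum_sq_nonneg[of n x] by (intro that) simp_all
qed

lemma bilin_form_transpose_mult_self:
  assumes "B \<in> carrier_mat m n"
  shows "bilin_form (transpose_mat B * B) w w = (\<Sum>k<m. (\<Sum>i<n. B $$ (k, i) * w i)\<^sup>2)"
proof -
  have dim: "dim_row (transpose_mat B * B) = n"
    using assms by simp
  have entry: "(transpose_mat B * B) $$ (i, j) = (\<Sum>k<m. B $$ (k, i) * B $$ (k, j))"
    if "i < n" "j < n" for i j
    using assms that by (simp add: scalar_prod_def lessThan_atLeast0 col_def row_def)
  have "bilin_form (transpose_mat B * B) w w = (\<Sum>i<n. \<Sum>j<n. \<Sum>k<m. B $$ (k, i) * w i * (B $$ (k, j) * w j))"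
    unfolding bilin_form_def dim
    by (intro sum.cong refl) (simp add: entry sum_distrib_left sum_distrib_right mult_ac)
  also have "\<dots> = (\<Sum>i<n. \<Sum>k<m. \<Sum>j<n. B $$ (k, i) * w i * (B $$ (k, j) * w j))"
    by (intro sum.cong refl sum.swap)
  also have "\<dots> = (\<Sum>k<m. \<Sum>i<n. \<Sum>j<n. B $$ (k, i) * w i * (B $$ (k, j) * w j))"
    by (rule sum.swap)
  also have "\<dots> = (\<Sum>k<m. (\<Sum>i<n. B $$ (k, i) * w i)\<^sup>2)"
    by (simp add: power2_eq_square sum_product)
  finally show ?thesis .
qed

text \<open>The operator norms of a matrix and of its transpose agree: apply Cauchy-Schwarz to
  \<open>|B\<^sup>T z|\<^sup>2 = \<langle>z, B B\<^sup>T z\<rangle>\<close>.\<close>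

lemma sum_sq_adjoint_le:
  fixes b :: "nat \<Rightarrow> nat \<Rightarrow> real"
  assumes "C \<ge> 0" and bound: "\<And>w. (\<Sum>k<m. (\<Sum>i<n. b k i * w i)\<^sup>2) \<le> C * sum_sq n w"
  shows "(\<Sum>i<n. (\<Sum>k<m. b k i * z k)\<^sup>2) \<le> C * sum_sq m z"
proof -
  define y where "y i = (\<Sum>k<m. b k i * z k)" for i
  define Y where "Y = sum_sq n y"
  have "Y = (\<Sum>i<n. \<Sum>k<m. z k * (b k i * y i))"
    unfolding Y_def sum_sq_def power2_eq_square by (simp add: y_def sum_distrib_right mult_ac)
  also have "\<dots> = (\<Sum>k<m. z k * (\<Sum>i<n. b k i * y i))"
    by (subst sum.swap) (simp add: sum_distrib_left)
  finally have "Y\<^sup>2 \<le> sum_sq m z * (\<Sum>k<m. (\<Sum>i<n. b k i * y i)\<^sup>2)"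
    unfolding sum_sq_def by (simp only: Cauchy_Schwarz_ineq_sum)
  also have "\<dots> \<le> sum_sq m z * (C * Y)"
    unfolding Y_def using bound sum_sq_nonneg by (rule mult_left_mono)
  finally have "Y * Y \<le> (C * sum_sq m z) * Y"
    by (simp add: power2_eq_square mult_ac)
  moreover have "Y \<ge> 0" "C * sum_sq m z \<ge> 0"
    using \<open>C \<ge> 0\<close> by (simp_all add: Y_def sum_sq_nonneg)
  ultimately have "Y \<le> C * sum_sq m z"
    by (cases "Y = 0") (simp_all add: mult_le_cancel_right_pos)
  then show ?thesis
    by (simp add: Y_def sum_sq_def y_def)
qed

lemma E_mat_index:
  assumes "i < n" "k < n"
  shows "E_mat n $$ (i, k) = of_bool (Suc k dvd Suc i)"
  using assms by (simp add: E_mat_def)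

lemma sum_sq_E_mat_le:
  assumes "0 < n"
  shows "(\<Sum>k<n. (\<Sum>i<n. E_mat n $$ (k, i) * w i)\<^sup>2) \<le> T_max n * sum_sq n w"
proof -
  have E: "E_mat n \<in> carrier_mat n n"
    by (simp add: E_mat_def)
  then have "transpose_mat (transpose_mat (E_mat n) * E_mat n) = transpose_mat (E_mat n) * E_mat n"
    by (simp add: transpose_mult[of _ n n _ n])
  then show ?thesis
    using bilin_form_le_Max_eigenvalue[of "transpose_mat (E_mat n) * E_mat n" n w] E assms
    by (simp add: bilin_form_transpose_mult_self[OF E] T_max_def)
qed

lemma T_max_nonneg:
  assumes "0 < n"
  shows "T_max n \<ge> 0"
proof -
  have "0 \<le> (\<Sum>k<n. (\<Sum>i<n. E_mat n $$ (k, i) * 1)\<^sup>2)"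
    by (simp add: sum_nonneg)
  also have "\<dots> \<le> T_max n * sum_sq n (\<lambda>_. 1)"
    by (rule sum_sq_E_mat_le[OF assms])
  finally show ?thesis
    using assms by (simp add: sum_sq_def zero_le_mult_iff)
qed

lemma sum_sq_E_mat_transpose_le:
  assumes "0 < n"
  shows "(\<Sum>k<n. (\<Sum>i<n. E_mat n $$ (i, k) * z i)\<^sup>2) \<le> T_max n * sum_sq n z"
  using sum_sq_adjoint_le[OF T_max_nonneg[OF assms] sum_sq_E_mat_le[OF assms]] .

lemma powr_le_max_one_powr:
  fixes a b e :: real
  assumes "1 \<le> a" "a \<le> b"
  shows "a powr e \<le> max 1 (b powr e)"
proof (cases "e \<ge> 0")
  case True
  then have "a powr e \<le> b powr e" using assms by (intro powr_mono2) auto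
  then show ?thesis by linarith
next
  case False
  then have "a powr e \<le> a powr 0" using assms by (intro powr_mono) auto
  then show ?thesis using assms by simp
qed

lemma min_one_powr_le_powr:
  fixes a b e :: real
  assumes "1 \<le> a" "a \<le> b"
  shows "min 1 (b powr e) \<le> a powr e"
proof (cases "e \<ge> 0")
  case True
  then have "a powr 0 \<le> a powr e" using assms by (intro powr_mono) auto
  then show ?thesis using assms by simp
next
  case False
  then have "b powr e \<le> a powr e" using assms by (intro powr_mono2') auto
  then show ?thesis by linarith
qed

lemma gcd_lcm_mat_index:
  assumes "i < n" "j < n"
  shows "gcd_lcm_mat n \<alpha> \<beta> $$ (i, j) = real (Suc i) powr \<beta> * real (Suc j) powr \<beta>
      * (\<Sum>k<n. E_mat n $$ (i, k) * E_mat n $$ (j, k) * Jordan_tot (\<alpha> - \<beta>) (Suc k))"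
proof -
  have "gcd_lcm_mat n \<alpha> \<beta> $$ (i, j) = real (gcd (Suc i) (Suc j)) powr \<alpha> * real (lcm (Suc i) (Suc j)) powr \<beta>"
    using assms by (simp add: gcd_lcm_mat_def)
  also have "\<dots> = real (Suc i) powr \<beta> * real (Suc j) powr \<beta> * real (gcd (Suc i) (Suc j)) powr (\<alpha> - \<beta>)"
    by (rule gcd_powr_lcm_powr) simp_all
  also have "real (gcd (Suc i) (Suc j)) powr (\<alpha> - \<beta>)
      = (\<Sum>k<n. E_mat n $$ (i, k) * E_mat n $$ (j, k) * Jordan_tot (\<alpha> - \<beta>) (Suc k))"
    using assms by (simp add: gcd_powr_eq_sum_Jordan_tot E_mat_index)
  finally show ?thesis .
qed

lemma bilin_form_gcd_lcm_mat:
  "bilin_form (gcd_lcm_mat n \<alpha> \<beta>) x x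
    = (\<Sum>k<n. Jordan_tot (\<alpha> - \<beta>) (Suc k) * (\<Sum>i<n. E_mat n $$ (i, k) * (real (Suc i) powr \<beta> * x i))\<^sup>2)"
proof -
  define z where "z i k = E_mat n $$ (i, k) * (real (Suc i) powr \<beta> * x i)" for i k
  define J where "J k = Jordan_tot (\<alpha> - \<beta>) (Suc k)" for k
  have dim: "dim_row (gcd_lcm_mat n \<alpha> \<beta>) = n"
    by (simp add: gcd_lcm_mat_def)
  have "bilin_form (gcd_lcm_mat n \<alpha> \<beta>) x x = (\<Sum>i<n. \<Sum>j<n. \<Sum>k<n. J k * (z i k * z j k))"
    unfolding bilin_form_def dim
    by (intro sum.cong refl) (simp add: gcd_lcm_mat_index z_def J_def sum_distrib_left mult_ac)
  also have "\<dots> = (\<Sum>i<n. \<Sum>k<n. \<Sum>j<n. J k * (z i k * z j k))"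
    by (intro sum.cong refl sum.swap)
  also have "\<dots> = (\<Sum>k<n. \<Sum>i<n. \<Sum>j<n. J k * (z i k * z j k))"
    by (rule sum.swap)
  also have "\<dots> = (\<Sum>k<n. J k * (\<Sum>i<n. z i k)\<^sup>2)"
    unfolding power2_eq_square sum_product by (simp only: sum_distrib_left)
  finally show ?thesis
    by (simp add: z_def J_def)
qed

lemma bilin_form_gcd_lcm_mat_le:
  assumes "0 < n"
  shows "bilin_form (gcd_lcm_mat n \<alpha> \<beta>) x x
    \<le> T_max n * max 1 (real n powr (2 * \<beta>)) * Max ((\<lambda>i. \<bar>Jordan_tot (\<alpha> - \<beta>) i\<bar>) ` {1..n})
      * sum_sq n x"
proof -
  define m where "m = Max ((\<lambda>i. \<bar>Jordan_tot (\<alpha> - \<beta>) i\<bar>) ` {1..n})"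
  define c where "c = max 1 (real n powr (2 * \<beta>))"
  define z where "z i = real (Suc i) powr \<beta> * x i" for i
  have abs_J_le: "\<bar>Jordan_tot (\<alpha> - \<beta>) (Suc k)\<bar> \<le> m" if "k < n" for k
    unfolding m_def using that by (intro Max_ge) auto
  then have J_le: "Jordan_tot (\<alpha> - \<beta>) (Suc k) \<le> m" if "k < n" for k
    using that abs_ge_self order_trans by blast
  have "m \<ge> 0"
    using abs_J_le[of 0] assms by simp
  have "sum_sq n z \<le> c * sum_sq n x"
    unfolding sum_sq_def sum_distrib_left
  proof (rule sum_mono)
    fix i assume "i \<in> {..<n}"
    then have "real (Suc i) powr (2 * \<beta>) \<le> c"
      unfolding c_def by (intro powr_le_max_one_powr) auto
    moreover have "(real (Suc i) powr \<beta>)\<^sup>2 = real (Suc i) powr (2 * \<beta>)"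
      by (simp only: power2_eq_square powr_add[symmetric] mult_2)
    then have "(z i)\<^sup>2 = real (Suc i) powr (2 * \<beta>) * (x i)\<^sup>2"
      unfolding z_def power_mult_distrib by simp
    ultimately show "(z i)\<^sup>2 \<le> c * (x i)\<^sup>2"
      by (simp add: mult_right_mono)
  qed
  have "bilin_form (gcd_lcm_mat n \<alpha> \<beta>) x x
      \<le> (\<Sum>k<n. m * (\<Sum>i<n. E_mat n $$ (i, k) * z i)\<^sup>2)"
    unfolding bilin_form_gcd_lcm_mat z_def[symmetric]
    by (intro sum_mono mult_right_mono J_le) auto
  also have "\<dots> \<le> m * (T_max n * sum_sq n z)"
    using sum_sq_E_mat_transpose_le[OF assms] \<open>m \<ge> 0\<close>
    by (simp add: sum_distrib_left[symmetric] mult_left_mono)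
  also have "\<dots> \<le> m * (T_max n * (c * sum_sq n x))"
    using \<open>sum_sq n z \<le> c * sum_sq n x\<close> \<open>m \<ge> 0\<close> T_max_nonneg[OF assms]
    by (intro mult_left_mono) auto
  finally show ?thesis
    by (simp add: m_def c_def mult_ac)
qed

lemma bilin_form_add_abs_ge:
  assumes A: "A \<in> carrier_mat n n"
    and nonneg: "\<And>i j. i < n \<Longrightarrow> j < n \<Longrightarrow> A $$ (i, j) \<ge> 0"
    and diag: "\<And>i. i < n \<Longrightarrow> A $$ (i, i) \<ge> d"
  shows "2 * d * sum_sq n x \<le> bilin_form A x x + bilin_form A (\<lambda>i. \<bar>x i\<bar>) (\<lambda>i. \<bar>x i\<bar>)"
proof -
  define f where "f i j = (x i * x j + \<bar>x i * x j\<bar>) * A $$ (i, j)" for i j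
  have f_nonneg: "f i j \<ge> 0" if "i < n" "j < n" for i j
    using nonneg[OF that] unfolding f_def by (simp add: abs_ge_minus_self)
  have "2 * d * sum_sq n x \<le> (\<Sum>i<n. f i i)"
    unfolding sum_sq_def sum_distrib_left
  proof (rule sum_mono)
    fix i assume "i \<in> {..<n}"
    then have "d * (x i)\<^sup>2 \<le> A $$ (i, i) * (x i)\<^sup>2"
      using diag by (intro mult_right_mono) auto
    then show "2 * d * (x i)\<^sup>2 \<le> f i i"
      by (simp add: f_def abs_mult_self_eq power2_eq_square mult_ac)
  qed
  also have "\<dots> \<le> (\<Sum>i<n. \<Sum>j<n. f i j)"
    using f_nonneg by (intro sum_mono member_le_sum) auto
  also have "\<dots> = bilin_form A x x + bilin_form A (\<lambda>i. \<bar>x i\<bar>) (\<lambda>i. \<bar>x i\<bar>)"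
  proof -
    have "f i j = x i * A $$ (i, j) * x j + \<bar>x i\<bar> * A $$ (i, j) * \<bar>x j\<bar>" for i j
      by (simp add: f_def abs_mult algebra_simps)
    then show ?thesis
      using A unfolding bilin_form_def by (simp add: sum.distrib)
  qed
  finally show ?thesis .
qed

lemma gcd_lcm_mat_diag_ge:
  assumes "i < n"
  shows "gcd_lcm_mat n \<alpha> \<beta> $$ (i, i) \<ge> min 1 (real n powr (\<alpha> + \<beta>))"
proof -
  have "gcd_lcm_mat n \<alpha> \<beta> $$ (i, i) = real (Suc i) powr (\<alpha> + \<beta>)"
    using assms by (simp add: gcd_lcm_mat_def powr_add)
  then show ?thesis
    using assms by (simp add: min_one_powr_le_powr)
qed

theorem theorem3p2:
  fixes n :: nat and \<alpha> \<beta> ev :: real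
  assumes "n \<ge> 1"
    and "eigenvalue (gcd_lcm_mat n \<alpha> \<beta>) ev"
  defines "M \<equiv> T_max n * max 1 (real n powr (2 * \<beta>))
                 * Max ((\<lambda>i. \<bar>Jordan_tot (\<alpha> - \<beta>) i\<bar>) ` {1..n})"
  shows "2 * min 1 (real n powr (\<alpha> + \<beta>)) - M \<le> ev \<and> ev \<le> M"
proof -
  let ?A = "gcd_lcm_mat n \<alpha> \<beta>"
  have A: "?A \<in> carrier_mat n n" and "0 < n"
    using assms(1) by (simp_all add: gcd_lcm_mat_def)
  obtain x where x: "sum_sq n x > 0" "bilin_form ?A x x = ev * sum_sq n x"
    using eigenvalue_imp_bilin_form_eq[OF A assms(2)] by blast
  have upper: "bilin_form ?A y y \<le> M * sum_sq n y" for y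
    unfolding M_def by (rule bilin_form_gcd_lcm_mat_le[OF \<open>0 < n\<close>])
  have "2 * min 1 (real n powr (\<alpha> + \<beta>)) * sum_sq n x
      \<le> bilin_form ?A x x + bilin_form ?A (\<lambda>i. \<bar>x i\<bar>) (\<lambda>i. \<bar>x i\<bar>)"
    by (intro bilin_form_add_abs_ge[OF A] gcd_lcm_mat_diag_ge)
      (simp add: gcd_lcm_mat_def)
  also have "\<dots> \<le> ev * sum_sq n x + M * sum_sq n x"
    using x(2) upper[of "\<lambda>i. \<bar>x i\<bar>"] by (simp add: sum_sq_def)
  finally have "(2 * min 1 (real n powr (\<alpha> + \<beta>)) - M) * sum_sq n x \<le> ev * sum_sq n x"
    by (simp add: algebra_simps)
  then have "2 * min 1 (real n powr (\<alpha> + \<beta>)) - M \<le> ev"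
    using x(1) by (simp add: mult_le_cancel_right_pos)
  moreover have "ev \<le> M"
    using x upper[of x] by simp
  ultimately show ?thesis ..
qed

end
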